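(* Let $0<e\le1$. For all $\sigma,k\in\mathbb{R}^3$ with $|\sigma|=|k|=1$ and all $z\in\mathbb{R}^3$, $$\big|P_{\sigma',k'}(z)-P_{k,\sigma}(z)\big|\le 2\,\frac{1-e}{e}\,|z|,$$ where $k'=\frac{(1-e)k+(1+e)\sigma}{\sqrt{2(1+e^2)+2(1-e^2)k\cdot\sigma}}$ and $\sigma'=\frac{(1+e)k+(1-e)\sigma}{\sqrt{2(1+e^2)+2(1-e^2)k\cdot\sigma}}$.
   Context: For vectors $a,b\in\mathbb{R}^3$, $P_{a,b}$ denotes the linear map $P_{a,b}(x)=(a\cdot x)\,b+(b\cdot a)\,x-(b\cdot x)\,a$. *)

theory Defs
  imports "HOL-Analysis.Analysis"
begin

definition P :: "real^3 \<Rightarrow> real^3 \<Rightarrow> real^3 \<Rightarrow> real^3" where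
  "P a b x = (a \<bullet> x) *\<^sub>R b + (b \<bullet> a) *\<^sub>R x - (b \<bullet> x) *\<^sub>R a"

end

theory Submission imports Defs begin

(* Write c = k \<bullet> \<sigma>, s = |\<sigma> \<times> k| (so s^2 = 1 - c^2 for unit vectors) and
   w = (k \<bullet> z) \<sigma> - (\<sigma> \<bullet> z) k = z \<times> (\<sigma> \<times> k), so that |w| \<le> s |z|.
   Expanding P bilinearly gives P k \<sigma> z = w + c z and, with Q = D^2,
   P \<sigma>' k' z = (4e w + (2(1-e^2) + 2(1+e^2) c) z) / Q.  Hence
     P \<sigma>' k' z - P k \<sigma> z = (-2(1-e) a w + 2(1-e^2) s^2 z) / Q,   a = (1-e) + (1+e) c,
   and Q = a^2 + ((1+e) s)^2.  By the triangle inequality the norm of the difference is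
   at most 2(1-e) s (|a| + (1+e) s) |z| / Q, and the elementary inequality
   e s (u + (1+e) s) \<le> u^2 + ((1+e) s)^2 (for u, s \<ge> 0, e \<le> 1) bounds this by
   2 (1-e)/e |z|. *)

unbundle cross3_syntax

lemma P_swapped_combination:
  fixes A B :: real and k \<sigma> z :: "real^3"
  shows "P (A *\<^sub>R k + B *\<^sub>R \<sigma>) (B *\<^sub>R k + A *\<^sub>R \<sigma>) z =
     (A * A - B * B) *\<^sub>R ((k \<bullet> z) *\<^sub>R \<sigma> - (\<sigma> \<bullet> z) *\<^sub>R k)
     + (A * B * (k \<bullet> k) + (A * A + B * B) * (k \<bullet> \<sigma>) + A * B * (\<sigma> \<bullet> \<sigma>)) *\<^sub>R z"
  unfolding P_def
  by (simp add: inner_add_left inner_add_right inner_commute algebra_simps)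

(* Scaling both vector arguments by t scales P by t^2; this absorbs the 1/D. *)
lemma P_scale: "P (t *\<^sub>R a) (t *\<^sub>R b) z = (t * t) *\<^sub>R P a b z"
  unfolding P_def by (simp add: algebra_simps)

lemma P_split: "P k \<sigma> z = ((k \<bullet> z) *\<^sub>R \<sigma> - (\<sigma> \<bullet> z) *\<^sub>R k) + (k \<bullet> \<sigma>) *\<^sub>R z"
  unfolding P_def by (simp add: inner_commute algebra_simps)

text \<open>The rotation part is a double cross product, hence controlled by |\<sigma> \<times> k|.\<close>

(* Cauchy-Schwarz for the cross product, from Lagrange's identity. *)
lemma norm_cross_le: "norm (x \<times> y) \<le> norm x * norm y"
proof -
  have "(norm (x \<times> y))\<^sup>2 \<le> (norm x * norm y)\<^sup>2"
    using norm_cross_dot[of x y] by (smt (verit) zero_le_power2)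
  thus ?thesis by (simp add: power2_le_iff_abs_le)
qed

lemma rotation_part_bound:
  "norm ((k \<bullet> z) *\<^sub>R \<sigma> - (\<sigma> \<bullet> z) *\<^sub>R k) \<le> norm (\<sigma> \<times> k) * norm z"
proof -
  have "(k \<bullet> z) *\<^sub>R \<sigma> - (\<sigma> \<bullet> z) *\<^sub>R k = z \<times> (\<sigma> \<times> k)"
    by (simp add: cross3_simps forall_3)
  thus ?thesis using norm_cross_le[of z "\<sigma> \<times> k"] by (simp add: mult.commute)
qed

text \<open>The scalar inequality behind the constant 2(1-e)/e: with v = (1+e)s one has
  e s \<le> v/2, and v(u+v)/2 \<le> u^2 + v^2.\<close>

lemma scalar_key_inequality:
  fixes e s u :: real
  assumes "e \<le> 1" "0 \<le> e" "0 \<le> s" "0 \<le> u"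
  shows "e * s * (u + (1 + e) * s) \<le> u\<^sup>2 + ((1 + e) * s)\<^sup>2"
proof -
  define v where "v = (1 + e) * s"
  have "v \<ge> 0" unfolding v_def using assms by simp
  have "e * s \<le> (1 + e) / 2 * s"
    using assms by (intro mult_right_mono) auto
  hence "e * s \<le> v / 2" unfolding v_def by simp
  hence "e * s * (u + v) \<le> v / 2 * (u + v)"
    using \<open>v \<ge> 0\<close> assms(4) by (intro mult_right_mono) auto
  also have "\<dots> \<le> u\<^sup>2 + v\<^sup>2"
  proof -
    have "2 * (u * v) \<le> u\<^sup>2 + v\<^sup>2"
      using zero_le_power2[of "u - v"] by (simp add: power2_diff)
    moreover have "v / 2 * (u + v) = (u * v) / 2 + v\<^sup>2 / 2"
      by (simp add: power2_eq_square algebra_simps)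
    ultimately show ?thesis using zero_le_power2[of u] zero_le_power2[of v] by linarith
  qed
  finally show ?thesis unfolding v_def .
qed

lemma collision_difference:
  fixes e :: real and \<sigma> k z :: "real^3"
  defines "w \<equiv> (k \<bullet> z) *\<^sub>R \<sigma> - (\<sigma> \<bullet> z) *\<^sub>R k"
  assumes "norm \<sigma> = 1" "norm k = 1"
    and c_def: "c = k \<bullet> \<sigma>" and Q_def: "Q = 2 * (1 + e\<^sup>2) + 2 * (1 - e\<^sup>2) * c"
    and "Q > 0"
  shows "P ((1 / sqrt Q) *\<^sub>R ((1 + e) *\<^sub>R k + (1 - e) *\<^sub>R \<sigma>))
           ((1 / sqrt Q) *\<^sub>R ((1 - e) *\<^sub>R k + (1 + e) *\<^sub>R \<sigma>)) z - P k \<sigma> z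
       = (- 2 * (1 - e) * ((1 - e) + (1 + e) * c) / Q) *\<^sub>R w
         + (2 * (1 - e\<^sup>2) * (1 - c\<^sup>2) / Q) *\<^sub>R z"
proof -
  have kk: "k \<bullet> k = 1" and ss: "\<sigma> \<bullet> \<sigma> = 1"
    using assms(2,3) by (simp_all add: dot_square_norm)
  have post: "P ((1 / sqrt Q) *\<^sub>R ((1 + e) *\<^sub>R k + (1 - e) *\<^sub>R \<sigma>))
           ((1 / sqrt Q) *\<^sub>R ((1 - e) *\<^sub>R k + (1 + e) *\<^sub>R \<sigma>)) z
     = (1 / Q) *\<^sub>R ((4 * e) *\<^sub>R w + (2 * (1 - e\<^sup>2) + 2 * (1 + e\<^sup>2) * c) *\<^sub>R z)"
    unfolding P_scale P_swapped_combination using assms(6) kk ss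
    by (simp add: w_def c_def power2_eq_square algebra_simps inner_commute)
  have pre: "P k \<sigma> z = w + c *\<^sub>R z"
    unfolding P_split w_def c_def ..
  have coeff_w: "- 2 * (1 - e) * ((1 - e) + (1 + e) * c) / Q = 4 * e / Q - 1"
    using assms(6) unfolding Q_def c_def by (simp add: field_simps power2_eq_square)
  have coeff_z: "2 * (1 - e\<^sup>2) * (1 - c\<^sup>2) / Q = (2 * (1 - e\<^sup>2) + 2 * (1 + e\<^sup>2) * c) / Q - c"
    using assms(6) unfolding Q_def c_def by (simp add: field_simps power2_eq_square)
  show ?thesis unfolding post pre coeff_w coeff_z
    by (simp add: scaleR_diff_left scaleR_diff_right scaleR_add_right scaleR_add_left
        diff_divide_distrib add_divide_distrib)
qed

lemma difference_norm_bound: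
  fixes e a s Q :: real and w z :: "'v::real_normed_vector"
  assumes e: "0 < e" "e \<le> 1" and s: "0 \<le> s"
    and Q: "Q = a\<^sup>2 + ((1 + e) * s)\<^sup>2" "Q > 0"
    and w: "norm w \<le> s * norm z"
  shows "norm ((- 2 * (1 - e) * a / Q) *\<^sub>R w + (2 * (1 - e\<^sup>2) * s\<^sup>2 / Q) *\<^sub>R z)
         \<le> 2 * ((1 - e) / e) * norm z"
proof -
  have abs_w: "\<bar>- 2 * (1 - e) * a / Q\<bar> = 2 * (1 - e) * \<bar>a\<bar> / Q"
    using e Q(2) by (simp add: abs_mult)
  have abs_z: "\<bar>2 * (1 - e\<^sup>2) * s\<^sup>2 / Q\<bar> = 2 * (1 - e\<^sup>2) * s\<^sup>2 / Q"
    using e Q(2) by (simp add: power_le_one)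
  have "norm ((- 2 * (1 - e) * a / Q) *\<^sub>R w + (2 * (1 - e\<^sup>2) * s\<^sup>2 / Q) *\<^sub>R z)
      \<le> 2 * (1 - e) * \<bar>a\<bar> / Q * norm w + 2 * (1 - e\<^sup>2) * s\<^sup>2 / Q * norm z"
    by (rule order_trans[OF norm_triangle_ineq]) (simp only: norm_scaleR abs_w abs_z order_refl)
  also have "\<dots> \<le> 2 * (1 - e) * \<bar>a\<bar> / Q * (s * norm z) + 2 * (1 - e\<^sup>2) * s\<^sup>2 / Q * norm z"
    using w e Q(2) by (intro add_right_mono mult_left_mono) auto
  also have "\<dots> = 2 * (1 - e) / (e * Q) * (e * s * (\<bar>a\<bar> + (1 + e) * s)) * norm z"
    using Q(2) e(1) by (simp add: field_simps power2_eq_square)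
  also have "\<dots> \<le> 2 * (1 - e) / (e * Q) * Q * norm z"
    using scalar_key_inequality[of e s "\<bar>a\<bar>"] e s Q
    by (intro mult_right_mono mult_left_mono) auto
  also have "\<dots> = 2 * ((1 - e) / e) * norm z"
    using Q(2) by simp
  finally show ?thesis .
qed

theorem lemma2p5:
  fixes e :: real and \<sigma> k z :: "real^3"
  assumes "0 < e" and "e \<le> 1"
    and "norm \<sigma> = 1" and "norm k = 1"
    and "2 * (1 + e\<^sup>2) + 2 * (1 - e\<^sup>2) * (k \<bullet> \<sigma>) \<noteq> 0"
  shows "let D = sqrt (2 * (1 + e\<^sup>2) + 2 * (1 - e\<^sup>2) * (k \<bullet> \<sigma>));
             k' = (1 / D) *\<^sub>R ((1 - e) *\<^sub>R k + (1 + e) *\<^sub>R \<sigma>);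
             \<sigma>' = (1 / D) *\<^sub>R ((1 + e) *\<^sub>R k + (1 - e) *\<^sub>R \<sigma>)
         in norm (P \<sigma>' k' z - P k \<sigma> z) \<le> 2 * ((1 - e) / e) * norm z"
proof -
  define c where "c = k \<bullet> \<sigma>"
  define s where "s = norm (\<sigma> \<times> k)"
  define Q where "Q = 2 * (1 + e\<^sup>2) + 2 * (1 - e\<^sup>2) * c"
  have s_sq: "s\<^sup>2 = 1 - c\<^sup>2"
    using norm_cross_dot[of \<sigma> k] assms(3,4) unfolding s_def c_def by (simp add: inner_commute)
  have Q_sum: "Q = ((1 - e) + (1 + e) * c)\<^sup>2 + ((1 + e) * s)\<^sup>2"
    unfolding Q_def power_mult_distrib s_sq by (simp add: power2_eq_square algebra_simps)
  have Q_pos: "Q > 0"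
    using assms(5) Q_sum unfolding Q_def c_def by (smt (verit) zero_le_power2)
  have "norm (P ((1 / sqrt Q) *\<^sub>R ((1 + e) *\<^sub>R k + (1 - e) *\<^sub>R \<sigma>))
           ((1 / sqrt Q) *\<^sub>R ((1 - e) *\<^sub>R k + (1 + e) *\<^sub>R \<sigma>)) z - P k \<sigma> z)
        \<le> 2 * ((1 - e) / e) * norm z"
    unfolding collision_difference[OF assms(3,4) c_def Q_def Q_pos] s_sq[symmetric]
    using difference_norm_bound[OF assms(1,2) _ Q_sum Q_pos] rotation_part_bound[of k z \<sigma>]
    unfolding s_def by simp
  thus ?thesis unfolding Let_def Q_def c_def .
qed

end
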